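(* Let $\Gamma$ be a countable group, $S$ a countable free $\Gamma$-set, and $\Gamma\curvearrowright(X,\mu)$ a standard $\Gamma$-space. Then the augmented chain complex $\tilde\varepsilon_S\colon L^\infty_{fs}(X\times S^{*+1};\mathbb{Z})\to L^\infty(X;\mathbb{Z})$ is a $\mathbb{Z}\Gamma$-resolution of $L^\infty(X;\mathbb{Z})$ (i.e. it is exact).
   Context: A standard $\Gamma$-space is a measure preserving action on a standard Borel probability space; $L^\infty(X;\mathbb{Z})$ has $\Gamma$-action $(\gamma f)(x)=f(\gamma^{-1}x)$. $L^\infty_{fs}(X\times S^{n+1};\mathbb{Z})$ is the $\mathbb{Z}\Gamma$-module of (classes of) essentially bounded measurable $f\colon X\times S^{n+1}\to\mathbb{Z}$ (w.r.t. $\mu\otimes$counting measure) supported in $X\times F$ for some finite $F\subset S^{n+1}$, with diagonal $\Gamma$-action, boundary $(\partial_nf)(x,s_0,\dots,s_{n-1})=\sum_{j=0}^n(-1)^j\sum_{t\in S}f(x,s_0,\dots,s_{j-1},t,s_j,\dots,s_{n-1})$ and augmentation $\tilde\varepsilon_Sf=\sum_{s\in S}f(\cdot,s)$. *)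

theory Defs
  imports "HOL-Probability.Probability" "HOL-Algebra.Group_Action"
begin

definition standard_borel :: "'x measure \<Rightarrow> bool" where
  "standard_borel M \<longleftrightarrow>
     (\<exists>d. Metric_space (space M) d \<and> Metric_space.mcomplete (space M) d \<and>
          separable_space (Metric_space.mtopology (space M) d) \<and>
          sets M = sigma_sets (space M) {U. openin (Metric_space.mtopology (space M) d) U})"

definition measure_preserving_map :: "'x measure \<Rightarrow> ('x \<Rightarrow> 'x) \<Rightarrow> bool" where
  "measure_preserving_map M T \<longleftrightarrow> T \<in> M \<rightarrow>\<^sub>M M \<and> distr M M T = M"

definition standard_G_space :: "('g, 'b) monoid_scheme \<Rightarrow> 'x measure \<Rightarrow> ('g \<Rightarrow> 'x \<Rightarrow> 'x) \<Rightarrow> bool" where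
  "standard_G_space G M a \<longleftrightarrow>
     prob_space M \<and> standard_borel M \<and> group_action G (space M) a \<and>
     (\<forall>g\<in>carrier G. measure_preserving_map M (a g))"

definition free_G_set :: "('g, 'b) monoid_scheme \<Rightarrow> 's set \<Rightarrow> ('g \<Rightarrow> 's \<Rightarrow> 's) \<Rightarrow> bool" where
  "free_G_set G S b \<longleftrightarrow> group_action G S b \<and>
     (\<forall>g\<in>carrier G. \<forall>s\<in>S. b g s = s \<longrightarrow> g = \<one>\<^bsub>G\<^esub>)"

text \<open>Tuples in S^(n+1), represented as lists of length n+1.\<close>
definition tuples :: "'s set \<Rightarrow> nat \<Rightarrow> 's list set" where
  "tuples S n = {s. length s = Suc n \<and> set s \<subseteq> S}"

text \<open>Representatives of elements of L^infty(X;Z): essentially bounded measurable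
  integer valued functions (classes are taken modulo a.e. equality).\<close>
definition Linf :: "'x measure \<Rightarrow> ('x \<Rightarrow> int) set" where
  "Linf M = {h. h \<in> M \<rightarrow>\<^sub>M count_space UNIV \<and> (\<exists>C. AE x in M. \<bar>h x\<bar> \<le> C)}"

text \<open>Representatives of elements of L^infty_fs(X x S^(n+1);Z): functions on X x S^(n+1)
  (extended by 0 outside S^(n+1)), measurable, essentially bounded w.r.t. mu x counting
  measure, and supported in X x F for a finite F. Since S^(n+1) is countable, measurability
  and essential boundedness w.r.t. the product with counting measure are checked slice-wise.
  Every class has such a representative; classes are taken modulo equality
  (mu x counting)-a.e., i.e. a.e. in x for every tuple.\<close>
definition Lfs :: "'x measure \<Rightarrow> 's set \<Rightarrow> nat \<Rightarrow> ('x \<Rightarrow> 's list \<Rightarrow> int) set" where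
  "Lfs M S n = {f.
     (\<forall>s. (\<lambda>x. f x s) \<in> M \<rightarrow>\<^sub>M count_space UNIV) \<and>
     (\<exists>C. \<forall>s\<in>tuples S n. AE x in M. \<bar>f x s\<bar> \<le> C) \<and>
     (\<exists>F. finite F \<and> F \<subseteq> tuples S n \<and> (\<forall>x s. s \<notin> F \<longrightarrow> f x s = 0))}"

definition fsum :: "('s \<Rightarrow> int) \<Rightarrow> 's set \<Rightarrow> int" where
  "fsum u A = sum u {t\<in>A. u t \<noteq> 0}"

definition ins_at :: "nat \<Rightarrow> 's \<Rightarrow> 's list \<Rightarrow> 's list" where
  "ins_at j t s = take j s @ t # drop j s"

definition bd :: "'s set \<Rightarrow> nat \<Rightarrow> ('x \<Rightarrow> 's list \<Rightarrow> int) \<Rightarrow> ('x \<Rightarrow> 's list \<Rightarrow> int)" where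
  "bd S n f = (\<lambda>x s. \<Sum>j\<le>n. (-1)^j * fsum (\<lambda>t. f x (ins_at j t s)) S)"

definition aug :: "'s set \<Rightarrow> ('x \<Rightarrow> 's list \<Rightarrow> int) \<Rightarrow> ('x \<Rightarrow> int)" where
  "aug S f = (\<lambda>x. fsum (\<lambda>s. f x [s]) S)"

definition gact_fs :: "('g, 'b) monoid_scheme \<Rightarrow> ('g \<Rightarrow> 'x \<Rightarrow> 'x) \<Rightarrow> ('g \<Rightarrow> 's \<Rightarrow> 's) \<Rightarrow> 'g
    \<Rightarrow> ('x \<Rightarrow> 's list \<Rightarrow> int) \<Rightarrow> ('x \<Rightarrow> 's list \<Rightarrow> int)" where
  "gact_fs G a b g f = (\<lambda>x s. f (a (inv\<^bsub>G\<^esub> g) x) (map (b (inv\<^bsub>G\<^esub> g)) s))"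

definition gact :: "('g, 'b) monoid_scheme \<Rightarrow> ('g \<Rightarrow> 'x \<Rightarrow> 'x) \<Rightarrow> 'g
    \<Rightarrow> ('x \<Rightarrow> int) \<Rightarrow> ('x \<Rightarrow> int)" where
  "gact G a g h = (\<lambda>x. h (a (inv\<^bsub>G\<^esub> g) x))"

end

theory Submission
  imports Defs
begin

text \<open>For each point x the complex is the ordered chain complex of the full simplex on S,
  with finitely supported chains. Fixing a vertex s0 \<in> S, the cone operator that prepends s0
  is a contracting homotopy: the boundary of the cone over \<phi> is \<phi> minus the cone over the
  boundary of \<phi>. The cone preserves measurability, essential bounds and finite support, so it
  contracts the complex of L-infinity functions as well; together with the boundary of a boundary
  being zero this gives exactness. Equivariance holds because every group element permutes S,
  so the sums defining the boundary are merely reindexed. The augmentation is the degree 0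
  boundary evaluated at the empty tuple, so degree 0 is not a separate case.\<close>

lemma length_ins_at [simp]: "length (ins_at j t s) = Suc (length s)"
  by (simp add: ins_at_def)

lemma set_ins_at [simp]: "set (ins_at j t s) = insert t (set s)"
  unfolding ins_at_def by (metis Un_insert_right append_take_drop_id list.simps(15) set_append)

lemma ins_at_0 [simp]: "ins_at 0 t s = t # s"
  by (simp add: ins_at_def)

lemma ins_at_Suc_Cons [simp]: "ins_at (Suc j) t (v # w) = v # ins_at j t w"
  by (simp add: ins_at_def)

lemma map_ins_at: "map \<beta> (ins_at j t s) = ins_at j (\<beta> t) (map \<beta> s)"
  by (simp add: ins_at_def take_map drop_map)

lemma ins_at_ins_at:
  "j \<le> i \<Longrightarrow> i \<le> length s \<Longrightarrow> ins_at j u (ins_at i t s) = ins_at (Suc i) t (ins_at j u s)"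
proof (induction s arbitrary: i j)
  case Nil
  then show ?case by (simp add: ins_at_def)
next
  case (Cons v w)
  show ?case
  proof (cases j)
    case (Suc j')
    with Cons.prems obtain i' where "i = Suc i'" by (cases i) auto
    with Cons Suc show ?thesis by simp
  qed simp
qed

lemma tuples_mono: "W \<subseteq> W' \<Longrightarrow> tuples W n \<subseteq> tuples W' n"
  unfolding tuples_def by auto

lemma finite_tuples: "finite W \<Longrightarrow> finite (tuples W n)"
  unfolding tuples_def using finite_lists_length_eq[of W "Suc n"] by (simp add: conj_commute)

lemma countable_tuples: "countable S \<Longrightarrow> countable (tuples S n)"
  by (rule countable_subset[OF _ countable_lists[of S]]) (auto simp: tuples_def)

definition bd_fin :: "'s set \<Rightarrow> nat \<Rightarrow> ('s list \<Rightarrow> int) \<Rightarrow> 's list \<Rightarrow> int" where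
  "bd_fin W n \<phi> s = (\<Sum>j\<le>n. (-1)^j * (\<Sum>t\<in>W. \<phi> (ins_at j t s)))"

definition cone :: "'s \<Rightarrow> ('s list \<Rightarrow> int) \<Rightarrow> 's list \<Rightarrow> int" where
  "cone s0 \<phi> u = (case u of [] \<Rightarrow> 0 | v # w \<Rightarrow> if v = s0 then \<phi> w else 0)"

lemma bd_fin_cong:
  assumes "\<And>j t. j \<le> n \<Longrightarrow> t \<in> W \<Longrightarrow> \<phi> (ins_at j t s) = \<psi> (ins_at j t s)"
  shows "bd_fin W n \<phi> s = bd_fin W n \<psi> s"
  unfolding bd_fin_def using assms by (intro sum.cong refl) auto

lemma bd_fin_bd_fin:
  assumes "finite W" "length s = m"
  shows "bd_fin W m (bd_fin W (Suc m) \<phi>) s = 0"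
proof -
  define A where "A i j = (\<Sum>t\<in>W. \<Sum>u\<in>W. \<phi> (ins_at j u (ins_at i t s)))" for i j
  define c where "c p = (-1::int)^(fst p + snd p) * A (fst p) (snd p)" for p
  define L where "L = {(i, j). i \<le> m \<and> j \<le> i}"
  define U where "U = {(i, j). i < j \<and> j \<le> Suc m}"
  have "bd_fin W m (bd_fin W (Suc m) \<phi>) s = (\<Sum>i\<le>m. \<Sum>j\<le>Suc m. (-1)^(i+j) * A i j)"
    unfolding bd_fin_def A_def sum_distrib_left
    by (rule sum.cong[OF refl], subst sum.swap, simp add: power_add mult_ac)
  also have "\<dots> = sum c ({..m} \<times> {..Suc m})"
    unfolding c_def sum.cartesian_product by (rule sum.cong) auto
  also have "{..m} \<times> {..Suc m} = L \<union> U"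
    by (auto simp: L_def U_def)
  also have "sum c (L \<union> U) = sum c L + sum c U"
  proof (rule sum.union_disjoint)
    show "finite L" by (rule finite_subset[of _ "{..m} \<times> {..m}"]) (auto simp: L_def)
    show "finite U" by (rule finite_subset[of _ "{..Suc m} \<times> {..Suc m}"]) (auto simp: U_def)
  qed (auto simp: L_def U_def)
  also have "sum c U = sum (\<lambda>p. c (snd p, Suc (fst p))) L"
    unfolding L_def U_def
    by (rule sum.reindex_bij_witness[of _ "\<lambda>p. (snd p, Suc (fst p))" "\<lambda>p. (snd p - 1, fst p)"]) auto
  also have "\<dots> = sum (\<lambda>p. - c p) L"
  proof (rule sum.cong[OF refl])
    fix p assume "p \<in> L"
    then obtain i j where p: "p = (i, j)" "i \<le> m" "j \<le> i" by (auto simp: L_def)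
    \<comment> \<open>the two ways of inserting a pair of vertices cancel\<close>
    have "A i j = (\<Sum>t\<in>W. \<Sum>u\<in>W. \<phi> (ins_at (Suc i) t (ins_at j u s)))"
      unfolding A_def using p assms(2) by (simp add: ins_at_ins_at)
    also have "\<dots> = A j (Suc i)" unfolding A_def by (rule sum.swap)
    finally show "c (snd p, Suc (fst p)) = - c p"
      unfolding c_def p by (simp add: add.commute)
  qed
  finally show ?thesis by (simp add: sum_negf)
qed

lemma bd_fin_cone:
  assumes "s0 \<in> W" "finite W"
  shows "bd_fin W (Suc m) (cone s0 \<phi>) (v # w) = \<phi> (v # w) - (if v = s0 then bd_fin W m \<phi> w else 0)"
proof -
  have first_face: "(\<Sum>t\<in>W. cone s0 \<phi> (t # v # w)) = \<phi> (v # w)"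
    using assms by (simp add: cone_def)
  have "bd_fin W (Suc m) (cone s0 \<phi>) (v # w) = (\<Sum>t\<in>W. cone s0 \<phi> (t # v # w))
     + (\<Sum>j\<le>m. (-1)^(Suc j) * (\<Sum>t\<in>W. cone s0 \<phi> (ins_at (Suc j) t (v # w))))"
    unfolding bd_fin_def by (subst sum.atMost_Suc_shift) simp
  also have "\<dots> = \<phi> (v # w) - (\<Sum>j\<le>m. (-1)^j * (\<Sum>t\<in>W. cone s0 \<phi> (v # ins_at j t w)))"
    by (simp add: first_face sum_negf)
  also have "\<dots> = \<phi> (v # w) - (if v = s0 then bd_fin W m \<phi> w else 0)"
    by (simp add: bd_fin_def cone_def)
  finally show ?thesis .
qed

lemma abs_bd_fin_le:
  assumes "\<And>u. \<bar>\<phi> u\<bar> \<le> C"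
  shows "\<bar>bd_fin W n \<phi> s\<bar> \<le> of_nat (Suc n) * (of_nat (card W) * C)"
proof -
  have face: "\<bar>\<Sum>t\<in>W. \<phi> (ins_at j t s)\<bar> \<le> of_nat (card W) * C" for j
    by (rule order.trans[OF sum_abs sum_bounded_above]) (use assms in auto)
  have "\<bar>bd_fin W n \<phi> s\<bar> \<le> (\<Sum>j\<le>n. \<bar>(-1)^j * (\<Sum>t\<in>W. \<phi> (ins_at j t s))\<bar>)"
    unfolding bd_fin_def by (rule sum_abs)
  also have "\<dots> \<le> of_nat (card {..n}) * (of_nat (card W) * C)"
    by (rule sum_bounded_above) (simp add: abs_mult face)
  finally show ?thesis by simp
qed

lemma measurable_sum_int [measurable (raw)]:
  fixes f :: "'c \<Rightarrow> 'a \<Rightarrow> int"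
  assumes "\<And>i. i \<in> S \<Longrightarrow> f i \<in> M \<rightarrow>\<^sub>M count_space UNIV"
  shows "(\<lambda>x. \<Sum>i\<in>S. f i x) \<in> M \<rightarrow>\<^sub>M count_space UNIV"
proof cases
  assume "finite S"
  then show ?thesis using assms by induct auto
qed simp

lemma fsum_eq_sum:
  assumes "finite W" "W \<subseteq> S" "\<And>t. t \<in> S \<Longrightarrow> h t \<noteq> 0 \<Longrightarrow> t \<in> W"
  shows "fsum h S = sum h W"
  unfolding fsum_def by (rule sum.mono_neutral_left) (use assms in auto)

lemma fsum_reindex_bij:
  assumes "bij_betw \<beta> S S"
  shows "fsum (\<lambda>t. h (\<beta> t)) S = fsum h S"
proof -
  have "bij_betw \<beta> {t\<in>S. h (\<beta> t) \<noteq> 0} {t\<in>S. h t \<noteq> 0}"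
    using assms unfolding bij_betw_def inj_on_def by auto
  then show ?thesis unfolding fsum_def using sum.reindex_bij_betw by fastforce
qed

lemma bd_eq_bd_fin:
  assumes "finite W" "W \<subseteq> S" "\<And>u. f x u \<noteq> 0 \<Longrightarrow> set u \<subseteq> W"
  shows "bd S n f x s = bd_fin W n (f x) s"
proof -
  have "fsum (\<lambda>t. f x (ins_at j t s)) S = (\<Sum>t\<in>W. f x (ins_at j t s))" for j
  proof (rule fsum_eq_sum[OF assms(1,2)])
    fix t assume "f x (ins_at j t s) \<noteq> 0"
    then show "t \<in> W" using assms(3) by fastforce
  qed
  then show ?thesis by (simp add: bd_def bd_fin_def)
qed

lemma aug_eq_bd: "aug S f = (\<lambda>x. bd S 0 f x [])"
  by (simp add: aug_def bd_def)

lemma bd_gact_fs: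
  assumes "group_action G S b" "g \<in> carrier G"
  shows "bd S n (gact_fs G a b g f) x s = gact_fs G a b g (bd S n f) x s"
proof -
  define \<beta> where "\<beta> = b (inv\<^bsub>G\<^esub> g)"
  have "group G"
    using group_action.group_hom[OF assms(1)] by (rule group_hom.axioms(1))
  with assms have bij: "bij_betw \<beta> S S"
    unfolding \<beta>_def by (simp add: bij_betw_def group_action.inj_prop group_action.surj_prop)
  have "fsum (\<lambda>t. f y (ins_at j (\<beta> t) (map \<beta> s))) S = fsum (\<lambda>t. f y (ins_at j t (map \<beta> s))) S"
    for y j using fsum_reindex_bij[OF bij, of "\<lambda>t. f y (ins_at j t (map \<beta> s))"] by simp
  then show ?thesis unfolding gact_fs_def bd_def \<beta>_def[symmetric] map_ins_at by simp
qed

lemma aug_gact_fs: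
  assumes "group_action G S b" "g \<in> carrier G"
  shows "aug S (gact_fs G a b g f) x = gact G a g (aug S f) x"
  using bd_gact_fs[OF assms, of 0 a f x "[]"] by (simp add: aug_eq_bd gact_fs_def gact_def)

lemma LfsI:
  assumes "\<And>u. (\<lambda>x. f x u) \<in> M \<rightarrow>\<^sub>M count_space UNIV"
    and "AE x in M. \<forall>u. \<bar>f x u\<bar> \<le> C"
    and "finite W" "W \<subseteq> S" "\<And>x u. f x u \<noteq> 0 \<Longrightarrow> u \<in> tuples W n"
  shows "f \<in> Lfs M S n"
proof -
  have "\<forall>s\<in>tuples S n. AE x in M. \<bar>f x s\<bar> \<le> C"
    using assms(2) by (auto elim: eventually_mono)
  moreover have "finite (tuples W n)" "tuples W n \<subseteq> tuples S n"
    using assms(3,4) by (simp_all add: finite_tuples tuples_mono)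
  moreover have "\<forall>x s. s \<notin> tuples W n \<longrightarrow> f x s = 0"
    using assms(5) by blast
  ultimately show ?thesis
    unfolding Lfs_def using assms(1) by blast
qed

lemma measurable_Lfs_slice: "f \<in> Lfs M S n \<Longrightarrow> (\<lambda>x. f x u) \<in> M \<rightarrow>\<^sub>M count_space UNIV"
  by (simp add: Lfs_def)

lemma Lfs_finite_support:
  assumes "f \<in> Lfs M S n"
  obtains W where "finite W" "W \<subseteq> S" "\<And>x u. f x u \<noteq> 0 \<Longrightarrow> u \<in> tuples W n"
proof -
  from assms obtain F where F: "finite F" "F \<subseteq> tuples S n" "\<And>x s. s \<notin> F \<Longrightarrow> f x s = 0"
    unfolding Lfs_def by blast
  show ?thesis
  proof
    show "finite (\<Union>(set ` F))" using F(1) by simp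
    show "\<Union>(set ` F) \<subseteq> S" using F(2) by (auto simp: tuples_def)
    show "u \<in> tuples (\<Union>(set ` F)) n" if "f x u \<noteq> 0" for x u
      using F that by (fastforce simp: tuples_def)
  qed
qed

lemma Lfs_AE_bounded:
  assumes "countable S" "f \<in> Lfs M S n"
  obtains C where "AE x in M. \<forall>u. \<bar>f x u\<bar> \<le> C"
proof -
  obtain C where "\<forall>s\<in>tuples S n. AE x in M. \<bar>f x s\<bar> \<le> C"
    using assms(2) unfolding Lfs_def by blast
  then have "AE x in M. \<forall>s\<in>tuples S n. \<bar>f x s\<bar> \<le> C"
    by (subst AE_ball_countable[OF countable_tuples[OF assms(1)]])
  obtain W where W: "finite W" "W \<subseteq> S" and supp: "\<And>x u. f x u \<noteq> 0 \<Longrightarrow> u \<in> tuples W n"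
    using Lfs_finite_support[OF assms(2)] by blast
  have "AE x in M. \<forall>u. \<bar>f x u\<bar> \<le> max C 0"
    using \<open>AE x in M. \<forall>s\<in>tuples S n. \<bar>f x s\<bar> \<le> C\<close>
  proof (rule eventually_mono)
    fix x assume bound: "\<forall>s\<in>tuples S n. \<bar>f x s\<bar> \<le> C"
    have "\<bar>f x u\<bar> \<le> max C 0" for u
    proof (cases "f x u = 0")
      case False
      then have "u \<in> tuples S n" using supp tuples_mono[OF W(2)] by blast
      with bound show ?thesis by force
    qed simp
    then show "\<forall>u. \<bar>f x u\<bar> \<le> max C 0" ..
  qed
  then show ?thesis by (rule that)
qed

lemma bd_support:
  assumes "\<And>u. f x u \<noteq> 0 \<Longrightarrow> u \<in> tuples W (Suc n)" "bd S (Suc n) f x s \<noteq> 0"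
  shows "s \<in> tuples W n"
proof -
  obtain j t where "f x (ins_at j t s) \<noteq> 0"
    using assms(2) unfolding bd_def fsum_def by (metis (no_types, lifting) mult_zero_right sum.neutral)
  then show ?thesis using assms(1) by (force simp: tuples_def)
qed

lemma measurable_bd:
  assumes "f \<in> Lfs M S m"
  shows "(\<lambda>x. bd S m f x s) \<in> M \<rightarrow>\<^sub>M count_space UNIV"
proof -
  obtain W where W: "finite W" "W \<subseteq> S" and supp: "\<And>x u. f x u \<noteq> 0 \<Longrightarrow> u \<in> tuples W m"
    using Lfs_finite_support[OF assms] by blast
  note [measurable] = measurable_Lfs_slice[OF assms]
  have bd: "(\<lambda>x. bd S m f x s) = (\<lambda>x. bd_fin W m (f x) s)"
    by (rule ext, rule bd_eq_bd_fin[OF W]) (use supp in \<open>auto simp: tuples_def\<close>)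
  show ?thesis unfolding bd bd_fin_def by measurable
qed

lemma AE_bounded_bd:
  assumes "countable S" "f \<in> Lfs M S m"
  shows "\<exists>C. AE x in M. \<forall>s. \<bar>bd S m f x s\<bar> \<le> C"
proof -
  obtain W where W: "finite W" "W \<subseteq> S" and supp: "\<And>x u. f x u \<noteq> 0 \<Longrightarrow> u \<in> tuples W m"
    using Lfs_finite_support[OF assms(2)] by blast
  obtain C where C: "AE x in M. \<forall>u. \<bar>f x u\<bar> \<le> C"
    using assms by (rule Lfs_AE_bounded)
  have bd: "bd S m f x s = bd_fin W m (f x) s" for x s
    by (rule bd_eq_bd_fin[OF W]) (use supp in \<open>auto simp: tuples_def\<close>)
  have "AE x in M. \<forall>s. \<bar>bd S m f x s\<bar> \<le> of_nat (Suc m) * (of_nat (card W) * C)"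
    using C by (rule eventually_mono) (auto simp only: bd intro!: abs_bd_fin_le)
  then show ?thesis ..
qed

lemma bd_in_Lfs:
  assumes "countable S" "f \<in> Lfs M S (Suc n)"
  shows "bd S (Suc n) f \<in> Lfs M S n"
proof -
  obtain W where W: "finite W" "W \<subseteq> S" and supp: "\<And>x u. f x u \<noteq> 0 \<Longrightarrow> u \<in> tuples W (Suc n)"
    using Lfs_finite_support[OF assms(2)] by blast
  obtain C where "AE x in M. \<forall>s. \<bar>bd S (Suc n) f x s\<bar> \<le> C"
    using AE_bounded_bd[OF assms] ..
  then show ?thesis
    by (rule LfsI[OF measurable_bd[OF assms(2)] _ W bd_support[OF supp]])
qed

lemma aug_in_Linf:
  assumes "countable S" "f \<in> Lfs M S 0"
  shows "aug S f \<in> Linf M"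
proof -
  obtain C where "AE x in M. \<forall>s. \<bar>bd S 0 f x s\<bar> \<le> C"
    using AE_bounded_bd[OF assms] ..
  then have "AE x in M. \<bar>aug S f x\<bar> \<le> C"
    by (rule eventually_mono) (simp add: aug_eq_bd)
  moreover have "aug S f \<in> M \<rightarrow>\<^sub>M count_space UNIV"
    using measurable_bd[OF assms(2)] by (simp add: aug_eq_bd)
  ultimately show ?thesis unfolding Linf_def by blast
qed

lemma aug_surj:
  assumes "s0 \<in> S" "h \<in> Linf M"
  shows "\<exists>f\<in>Lfs M S 0. AE x in M. aug S f x = h x"
proof -
  obtain C where meas: "h \<in> M \<rightarrow>\<^sub>M count_space UNIV" and C: "AE x in M. \<bar>h x\<bar> \<le> C"
    using assms(2) unfolding Linf_def by blast
  define f where "f = (\<lambda>x u. if u = [s0] then h x else (0::int))"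
  have "f \<in> Lfs M S 0"
  proof (rule LfsI[where W="{s0}" and C=C])
    show "(\<lambda>x. f x u) \<in> M \<rightarrow>\<^sub>M count_space UNIV" for u
      unfolding f_def using meas by (cases "u = [s0]") auto
    show "AE x in M. \<forall>u. \<bar>f x u\<bar> \<le> C"
      using C by (rule eventually_mono) (auto simp: f_def)
  qed (use assms(1) in \<open>auto simp: f_def tuples_def split: if_splits\<close>)
  moreover have "aug S f x = h x" for x
    using assms(1) by (simp add: aug_def fsum_def f_def)
  ultimately show ?thesis by auto
qed

lemma cone_support:
  assumes "s0 \<in> W" "\<And>u. \<phi> u \<noteq> 0 \<Longrightarrow> u \<in> tuples W m" "cone s0 \<phi> u \<noteq> 0"
  shows "u \<in> tuples W (Suc m)"
  using assms by (cases u) (auto simp: cone_def tuples_def split: if_splits)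

lemma cone_in_Lfs:
  assumes "countable S" "s0 \<in> S" "f \<in> Lfs M S m"
  shows "(\<lambda>x. cone s0 (f x)) \<in> Lfs M S (Suc m)"
proof -
  obtain W where W: "finite W" "W \<subseteq> S" and supp: "\<And>x u. f x u \<noteq> 0 \<Longrightarrow> u \<in> tuples W m"
    using Lfs_finite_support[OF assms(3)] by blast
  have supp_cone: "cone s0 (f x) u \<noteq> 0 \<Longrightarrow> u \<in> tuples (insert s0 W) (Suc m)" for x u
    by (rule cone_support) (use supp tuples_mono[of W "insert s0 W"] in auto)
  obtain C where C: "AE x in M. \<forall>u. \<bar>f x u\<bar> \<le> C"
    using assms(1,3) by (rule Lfs_AE_bounded)
  show ?thesis
  proof (rule LfsI[OF _ _ _ _ supp_cone])
    show "(\<lambda>x. cone s0 (f x) u) \<in> M \<rightarrow>\<^sub>M count_space UNIV" for u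
      using measurable_Lfs_slice[OF assms(3)] by (cases u) (auto simp: cone_def)
    show "AE x in M. \<forall>u. \<bar>cone s0 (f x) u\<bar> \<le> C"
      using C
    proof (rule eventually_mono)
      fix x assume bound: "\<forall>u. \<bar>f x u\<bar> \<le> C"
      then have "0 \<le> C" by (meson abs_ge_zero order_trans)
      with bound show "\<forall>u. \<bar>cone s0 (f x) u\<bar> \<le> C"
        by (auto simp: cone_def split: list.split)
    qed
  qed (use W assms(2) in auto)
qed

lemma bd_cone:
  assumes "s0 \<in> S" "f \<in> Lfs M S m"
  shows "bd S (Suc m) (\<lambda>x. cone s0 (f x)) x (v # w)
           = f x (v # w) - (if v = s0 then bd S m f x w else 0)"
proof -
  obtain W0 where W0: "finite W0" "W0 \<subseteq> S" and supp0: "\<And>x u. f x u \<noteq> 0 \<Longrightarrow> u \<in> tuples W0 m"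
    using Lfs_finite_support[OF assms(2)] by blast
  define W where "W = insert s0 W0"
  have W: "finite W" "W \<subseteq> S" "s0 \<in> W" using W0 assms(1) by (auto simp: W_def)
  have supp: "f x u \<noteq> 0 \<Longrightarrow> u \<in> tuples W m" for x u
    using supp0 tuples_mono[of W0 W] by (auto simp: W_def)
  have "bd S (Suc m) (\<lambda>x. cone s0 (f x)) x (v # w) = bd_fin W (Suc m) (cone s0 (f x)) (v # w)"
    by (rule bd_eq_bd_fin[OF W(1,2)]) (use cone_support[OF W(3) supp] in \<open>auto simp: tuples_def\<close>)
  also have "\<dots> = f x (v # w) - (if v = s0 then bd_fin W m (f x) w else 0)"
    by (rule bd_fin_cone[OF W(3,1)])
  also have "bd_fin W m (f x) w = bd S m f x w"
    by (rule bd_eq_bd_fin[OF W(1,2), symmetric]) (use supp in \<open>auto simp: tuples_def\<close>)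
  finally show ?thesis .
qed

lemma AE_bd_eq_0_if_boundary:
  assumes "countable S" "f \<in> Lfs M S m" "g \<in> Lfs M S (Suc m)"
    and "\<forall>u\<in>tuples S m. AE x in M. bd S (Suc m) g x u = f x u"
    and "length s = m" "set s \<subseteq> S"
  shows "AE x in M. bd S m f x s = 0"
proof -
  obtain Wf where Wf: "finite Wf" "Wf \<subseteq> S" and supp_f: "\<And>x u. f x u \<noteq> 0 \<Longrightarrow> u \<in> tuples Wf m"
    using Lfs_finite_support[OF assms(2)] by blast
  obtain Wg where Wg: "finite Wg" "Wg \<subseteq> S" and supp_g: "\<And>x u. g x u \<noteq> 0 \<Longrightarrow> u \<in> tuples Wg (Suc m)"
    using Lfs_finite_support[OF assms(3)] by blast
  define W where "W = Wf \<union> Wg"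
  have W: "finite W" "W \<subseteq> S" using Wf Wg by (auto simp: W_def)
  have "AE x in M. \<forall>u\<in>tuples S m. bd S (Suc m) g x u = f x u"
    using assms(4) by (subst AE_ball_countable[OF countable_tuples[OF assms(1)]])
  then show ?thesis
  proof (rule eventually_mono)
    fix x assume boundary: "\<forall>u\<in>tuples S m. bd S (Suc m) g x u = f x u"
    have "bd S m f x s = bd_fin W m (f x) s"
      by (rule bd_eq_bd_fin[OF W]) (use supp_f in \<open>auto simp: W_def tuples_def\<close>)
    also have "\<dots> = bd_fin W m (bd_fin W (Suc m) (g x)) s"
    proof (rule bd_fin_cong)
      fix j t assume "t \<in> W"
      then have "ins_at j t s \<in> tuples S m" using assms(5,6) W(2) by (auto simp: tuples_def)
      then have "f x (ins_at j t s) = bd S (Suc m) g x (ins_at j t s)" using boundary by simp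
      also have "\<dots> = bd_fin W (Suc m) (g x) (ins_at j t s)"
        by (rule bd_eq_bd_fin[OF W]) (use supp_g in \<open>auto simp: W_def tuples_def\<close>)
      finally show "f x (ins_at j t s) = bd_fin W (Suc m) (g x) (ins_at j t s)" .
    qed
    also have "\<dots> = 0" by (rule bd_fin_bd_fin[OF W(1) assms(5)])
    finally show "bd S m f x s = 0" .
  qed
qed

lemma bd_exact:
  assumes "countable S" "s0 \<in> S" "f \<in> Lfs M S m"
  shows "(\<forall>s. length s = m \<longrightarrow> set s \<subseteq> S \<longrightarrow> (AE x in M. bd S m f x s = 0)) \<longleftrightarrow>
         (\<exists>g\<in>Lfs M S (Suc m). \<forall>s\<in>tuples S m. AE x in M. bd S (Suc m) g x s = f x s)"
proof
  assume cycle: "\<forall>s. length s = m \<longrightarrow> set s \<subseteq> S \<longrightarrow> (AE x in M. bd S m f x s = 0)"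
  have "AE x in M. bd S (Suc m) (\<lambda>x. cone s0 (f x)) x s = f x s" if "s \<in> tuples S m" for s
  proof -
    from that obtain v w where s: "s = v # w" and "length w = m" "set w \<subseteq> S"
      by (cases s) (auto simp: tuples_def)
    then have "AE x in M. bd S m f x w = 0" using cycle by blast
    then show ?thesis
      by (rule eventually_mono) (simp add: s bd_cone[OF assms(2,3)])
  qed
  then show "\<exists>g\<in>Lfs M S (Suc m). \<forall>s\<in>tuples S m. AE x in M. bd S (Suc m) g x s = f x s"
    using cone_in_Lfs[OF assms] by blast
next
  assume "\<exists>g\<in>Lfs M S (Suc m). \<forall>s\<in>tuples S m. AE x in M. bd S (Suc m) g x s = f x s"
  then show "\<forall>s. length s = m \<longrightarrow> set s \<subseteq> S \<longrightarrow> (AE x in M. bd S m f x s = 0)"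
    using AE_bd_eq_0_if_boundary[OF assms(1,3)] by blast
qed

theorem corollary4p2:
  fixes G :: "('g, 'b) monoid_scheme"
    and S :: "'s set" and b :: "'g \<Rightarrow> 's \<Rightarrow> 's"
    and M :: "'x measure" and a :: "'g \<Rightarrow> 'x \<Rightarrow> 'x"
  assumes "group G" and "countable (carrier G)"
    and "free_G_set G S b" and "countable S" and "S \<noteq> {}"
    and "standard_G_space G M a"
  shows
    \<comment> \<open>the maps are well defined and Z Gamma-linear\<close>
    "(\<forall>n. \<forall>f\<in>Lfs M S (Suc n). bd S (Suc n) f \<in> Lfs M S n)
     \<and> (\<forall>f\<in>Lfs M S 0. aug S f \<in> Linf M)
     \<and> (\<forall>n. \<forall>g\<in>carrier G. \<forall>f\<in>Lfs M S (Suc n). \<forall>s\<in>tuples S n.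
          AE x in M. bd S (Suc n) (gact_fs G a b g f) x s = gact_fs G a b g (bd S (Suc n) f) x s)
     \<and> (\<forall>g\<in>carrier G. \<forall>f\<in>Lfs M S 0.
          AE x in M. aug S (gact_fs G a b g f) x = gact G a g (aug S f) x)
     \<comment> \<open>exactness at L^infty(X;Z): the augmentation is surjective\<close>
     \<and> (\<forall>h\<in>Linf M. \<exists>f\<in>Lfs M S 0. AE x in M. aug S f x = h x)
     \<comment> \<open>exactness in degree 0: ker aug = im bd_1\<close>
     \<and> (\<forall>f\<in>Lfs M S 0. (AE x in M. aug S f x = 0) \<longleftrightarrow>
          (\<exists>g\<in>Lfs M S 1. \<forall>s\<in>tuples S 0. AE x in M. bd S 1 g x s = f x s))
     \<comment> \<open>exactness in degree n \<ge> 1: ker bd_n = im bd_(n+1)\<close>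
     \<and> (\<forall>n. \<forall>f\<in>Lfs M S (Suc n).
          (\<forall>s\<in>tuples S n. AE x in M. bd S (Suc n) f x s = 0) \<longleftrightarrow>
          (\<exists>g\<in>Lfs M S (Suc (Suc n)). \<forall>s\<in>tuples S (Suc n).
              AE x in M. bd S (Suc (Suc n)) g x s = f x s))"
proof -
  have action: "group_action G S b" using assms(3) by (simp add: free_G_set_def)
  obtain s0 where s0: "s0 \<in> S" using assms(5) by blast
  have exact0: "(AE x in M. aug S f x = 0) \<longleftrightarrow>
      (\<exists>g\<in>Lfs M S 1. \<forall>s\<in>tuples S 0. AE x in M. bd S 1 g x s = f x s)" if "f \<in> Lfs M S 0" for f
    using bd_exact[OF assms(4) s0 that] by (simp add: aug_eq_bd)
  have exact: "(\<forall>s\<in>tuples S n. AE x in M. bd S (Suc n) f x s = 0) \<longleftrightarrow>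
      (\<exists>g\<in>Lfs M S (Suc (Suc n)). \<forall>s\<in>tuples S (Suc n). AE x in M. bd S (Suc (Suc n)) g x s = f x s)"
    if "f \<in> Lfs M S (Suc n)" for n f
    using bd_exact[OF assms(4) s0 that] by (simp add: tuples_def imp_conjL)
  show ?thesis
    by (intro conjI allI ballI AE_I2)
      (simp_all add: bd_in_Lfs[OF assms(4)] aug_in_Linf[OF assms(4)] aug_surj[OF s0] exact0 exact
        bd_gact_fs[OF action] aug_gact_fs[OF action])
qed

end
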